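(* Let $N,M$ be integers with $0<M<N/2$. For symbols $a,b\in\{0,1,X\}$ let $\mathbf{Str}_{ab}$ be the sub-poset of $\mathbf{Str}(N,M)$ consisting of strings $s$ with $s_1=a$ and $s_N=b$. Then the geometric realizations of $\mathbf{Str}_{0X}$, $\mathbf{Str}_{X0}$, $\mathbf{Str}_{1X}$ and $\mathbf{Str}_{X1}$ are contractible.
   Context: A circular symbol string of length $N$ is $s=s_1\cdots s_N$ with each $s_i\in\{0,1,X\}$, indices read cyclically modulo $N$; $0,1$ are called bits. A block of $s$ is a maximal cyclic run of consecutive equal symbols. $s$ is a circular cellular string of rank $M$ if it has exactly $M$ blocks of symbol $0$, exactly $M$ blocks of symbol $1$, and every block of symbol $X$ is cyclically preceded and followed by blocks of different bits (one of symbol $0$ and one of symbol $1$). $\mathbf{Str}(N,M)$ is the set of such strings, partially ordered by $s'<s$ iff $s$ is obtained from $s'$ by replacing some (at least one) of the bits of $s'$ by $X$. The geometric realization of a poset is that of its order complex. *)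

theory Defs
  imports "HOL-Analysis.Analysis"
begin

datatype sym = S0 | S1 | SX

text \<open>A circular string of length N is a list s of length N; the paper's s_i
  (i = 1..N) is s ! (i - 1), and cyclic index arithmetic is taken mod N.\<close>

definition cat :: "sym list \<Rightarrow> int \<Rightarrow> sym" where
  "cat s i = s ! nat (i mod int (length s))"

text \<open>Number of maximal cyclic blocks of symbol c: if the whole string is c,
  there is one block; otherwise count the positions where a c-block starts.\<close>
definition nblocks :: "sym list \<Rightarrow> sym \<Rightarrow> nat" where
  "nblocks s c = (if s \<noteq> [] \<and> (\<forall>i<length s. s ! i = c) then 1
     else card {i. i < length s \<and> cat s (int i) = c \<and> cat s (int i - 1) \<noteq> c})"

text \<open>Every maximal X-block s_i..s_{i+d-1} (cyclically preceded by a non-X symbol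
  at i-1 and followed by a non-X symbol at i+d) is preceded and followed by
  blocks of different bits.\<close>
definition xblocks_ok :: "sym list \<Rightarrow> bool" where
  "xblocks_ok s = (\<forall>i d. i < length s \<and> 0 < d \<and>
       cat s (int i - 1) \<noteq> SX \<and> (\<forall>t<d. cat s (int i + int t) = SX) \<and>
       cat s (int i + int d) \<noteq> SX
     \<longrightarrow> cat s (int i - 1) \<noteq> cat s (int i + int d))"

definition Str :: "nat \<Rightarrow> nat \<Rightarrow> sym list set" where
  "Str N M = {s. length s = N \<and> nblocks s S0 = M \<and> nblocks s S1 = M \<and> xblocks_ok s}"

definition strle :: "sym list \<Rightarrow> sym list \<Rightarrow> bool" where
  "strle s' s = (length s' = length s \<and> (\<forall>i<length s. s' ! i = s ! i \<or> s ! i = SX))"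

definition Str_ab :: "nat \<Rightarrow> nat \<Rightarrow> sym \<Rightarrow> sym \<Rightarrow> sym list set" where
  "Str_ab N M a b = {s \<in> Str N M. s ! 0 = a \<and> s ! (N - 1) = b}"

text \<open>Geometric realization of the order complex of a finite poset (P, le):
  all finitely supported nonnegative weight functions of total weight 1 supported
  on a chain of P, with the topology induced from the product topology
  (for finite P this is the Euclidean topology of R^P).\<close>
definition geom_real :: "'a set \<Rightarrow> ('a \<Rightarrow> 'a \<Rightarrow> bool) \<Rightarrow> ('a \<Rightarrow> real) topology" where
  "geom_real P le = subtopology (powertop_real UNIV)
     {f. (\<forall>x. 0 \<le> f x) \<and> (\<forall>x. x \<notin> P \<longrightarrow> f x = 0) \<and> finite {x. f x \<noteq> 0}
        \<and> sum f {x. f x \<noteq> 0} = 1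
        \<and> (\<forall>x y. f x \<noteq> 0 \<and> f y \<noteq> 0 \<longrightarrow> le x y \<or> le y x)}"

end

theory Submission
  imports Defs
begin

text \<open>A string with an \<open>X\<close> at one end is determined by its bit blocks, i.e. by \<open>2 M\<close>
  intervals \<open>[A i, B i]\<close> carrying alternating bits, and \<open>s' \<le> s\<close> holds iff every block of \<open>s\<close>
  lies inside the corresponding block of \<open>s'\<close>. In \<open>Str\<^sub>a\<^sub>X\<close> the first block starts at position
  \<open>0\<close>. Stretching block \<open>l\<close> to the left until it starts at \<open>l\<close> and then shrinking it to
  \<open>{l}\<close>, for \<open>l = 0, 1, \<dots>\<close> in turn, is a zigzag of order-preserving maps, each comparable
  with the next, from the identity to a constant map. Comparable order-preserving maps induce
  homotopic maps of the geometric realization, so \<open>Str\<^sub>a\<^sub>X\<close> is contractible. Reversing strings is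
  an order isomorphism from \<open>Str\<^sub>a\<^sub>X\<close> onto \<open>Str\<^sub>X\<^sub>a\<close>.\<close>

section \<open>Homotopies of order complexes\<close>

definition geom_real_points :: "'a set \<Rightarrow> ('a \<Rightarrow> 'a \<Rightarrow> bool) \<Rightarrow> ('a \<Rightarrow> real) set" where
  "geom_real_points P le = {f. (\<forall>x. 0 \<le> f x) \<and> (\<forall>x. x \<notin> P \<longrightarrow> f x = 0) \<and> finite {x. f x \<noteq> 0}
        \<and> sum f {x. f x \<noteq> 0} = 1
        \<and> (\<forall>x y. f x \<noteq> 0 \<and> f y \<noteq> 0 \<longrightarrow> le x y \<or> le y x)}"

lemma geom_real_eq: "geom_real P le = subtopology (powertop_real UNIV) (geom_real_points P le)"
  unfolding geom_real_def geom_real_points_def by simp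

lemma topspace_geom_real [simp]: "topspace (geom_real P le) = geom_real_points P le"
  by (simp add: geom_real_eq)

lemma sum_geom_real_points:
  assumes "finite P" "g \<in> geom_real_points P le"
  shows "sum g P = 1"
proof -
  have "{x. g x \<noteq> 0} \<subseteq> P" using assms(2) by (auto simp: geom_real_points_def)
  then have "sum g P = sum g {x. g x \<noteq> 0}"
    by (intro sum.mono_neutral_right) (use assms in auto)
  then show ?thesis using assms(2) by (simp add: geom_real_points_def)
qed

lemma geom_real_pointsI:
  assumes "finite P" "\<And>x. 0 \<le> g x" "\<And>x. x \<notin> P \<Longrightarrow> g x = 0" "sum g P = 1"
    "\<And>x y. g x \<noteq> 0 \<Longrightarrow> g y \<noteq> 0 \<Longrightarrow> le x y \<or> le y x"
  shows "g \<in> geom_real_points P le"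
proof -
  have sub: "{x. g x \<noteq> 0} \<subseteq> P" using assms(3) by auto
  then have "finite {x. g x \<noteq> 0}" using assms(1) finite_subset by blast
  moreover have "sum g P = sum g {x. g x \<noteq> 0}"
    by (intro sum.mono_neutral_right) (use assms sub in auto)
  ultimately show ?thesis using assms unfolding geom_real_points_def by auto
qed

lemma continuous_map_geom_real_coordinate:
  "continuous_map (geom_real P le) euclideanreal (\<lambda>g. g x)"
  unfolding geom_real_eq
  by (rule continuous_map_from_subtopology) (rule continuous_map_product_projection, simp)

definition pushforward :: "'a set \<Rightarrow> ('a \<Rightarrow> 'a) \<Rightarrow> ('a \<Rightarrow> real) \<Rightarrow> 'a \<Rightarrow> real" where
  "pushforward P f g = (\<lambda>z. \<Sum>x\<in>{x\<in>P. f x = z}. g x)"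

lemma pushforward_id:
  assumes "g \<in> geom_real_points P le" "\<And>x. x \<in> P \<Longrightarrow> f x = x"
  shows "pushforward P f g = g"
proof
  fix z
  have "{x \<in> P. f x = z} = (if z \<in> P then {z} else {})" using assms(2) by auto
  then show "pushforward P f g z = g z"
    using assms(1) by (auto simp: pushforward_def geom_real_points_def)
qed

lemma pushforward_nonzero: "pushforward P f g z \<noteq> 0 \<Longrightarrow> \<exists>x\<in>P. f x = z \<and> g x \<noteq> 0"
  unfolding pushforward_def by (auto intro: ccontr sum.neutral)

lemma pushforward_const:
  assumes "finite P" "g \<in> geom_real_points P le" "\<And>x. x \<in> P \<Longrightarrow> f x = c"
  shows "pushforward P f g = (\<lambda>z. if z = c then 1 else 0)"
proof
  fix z
  have "{x \<in> P. f x = z} = (if z = c then P else {})" using assms(3) by auto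
  then show "pushforward P f g z = (if z = c then 1 else 0)"
    unfolding pushforward_def using sum_geom_real_points[OF assms(1,2)] by simp
qed

definition mass_above :: "'a set \<Rightarrow> ('a \<Rightarrow> 'a \<Rightarrow> bool) \<Rightarrow> ('a \<Rightarrow> real) \<Rightarrow> 'a \<Rightarrow> real" where
  "mass_above P le g x = (\<Sum>y\<in>{y\<in>P. le x y}. g y)"

definition mass_strictly_above :: "'a set \<Rightarrow> ('a \<Rightarrow> 'a \<Rightarrow> bool) \<Rightarrow> ('a \<Rightarrow> real) \<Rightarrow> 'a \<Rightarrow> real" where
  "mass_strictly_above P le g x = (\<Sum>y\<in>{y\<in>P. le x y \<and> y \<noteq> x}. g y)"

locale finite_poset_on =
  fixes P :: "'a set" and le :: "'a \<Rightarrow> 'a \<Rightarrow> bool"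
  assumes finite_P: "finite P"
    and reflexive: "\<And>x. x \<in> P \<Longrightarrow> le x x"
    and transitive: "\<And>x y z. x \<in> P \<Longrightarrow> y \<in> P \<Longrightarrow> z \<in> P \<Longrightarrow> le x y \<Longrightarrow> le y z \<Longrightarrow> le x z"
    and antisymmetric: "\<And>x y. x \<in> P \<Longrightarrow> y \<in> P \<Longrightarrow> le x y \<Longrightarrow> le y x \<Longrightarrow> x = y"
begin

lemma mass_above_split: "x \<in> P \<Longrightarrow> mass_above P le g x = g x + mass_strictly_above P le g x"
proof -
  assume x: "x \<in> P"
  then have "{y\<in>P. le x y} = insert x {y\<in>P. le x y \<and> y \<noteq> x}" using reflexive by auto
  then show ?thesis unfolding mass_above_def mass_strictly_above_def using finite_P by simp
qed

lemma mass_strictly_above_nonneg: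
  "g \<in> geom_real_points P le \<Longrightarrow> 0 \<le> mass_strictly_above P le g x"
  unfolding mass_strictly_above_def geom_real_points_def by (auto intro: sum_nonneg)

lemma mass_above_le_1: "g \<in> geom_real_points P le \<Longrightarrow> mass_above P le g x \<le> 1"
proof -
  assume g: "g \<in> geom_real_points P le"
  have "mass_above P le g x \<le> sum g P" unfolding mass_above_def
    by (rule sum_mono2) (use finite_P g in \<open>auto simp: geom_real_points_def\<close>)
  then show ?thesis using sum_geom_real_points[OF finite_P g] by simp
qed

lemma mass_above_le_mass_strictly_above:
  assumes g: "g \<in> geom_real_points P le" and "x \<in> P" "x' \<in> P" "le x x'" "x \<noteq> x'"
  shows "mass_above P le g x' \<le> mass_strictly_above P le g x"
  unfolding mass_above_def mass_strictly_above_def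
proof (rule sum_mono2)
  show "finite {y \<in> P. le x y \<and> y \<noteq> x}" using finite_P by simp
  show "{y \<in> P. le x' y} \<subseteq> {y \<in> P. le x y \<and> y \<noteq> x}"
    using assms transitive antisymmetric by blast
  show "\<And>y. y \<in> {y \<in> P. le x y \<and> y \<noteq> x} - {y \<in> P. le x' y} \<Longrightarrow> 0 \<le> g y"
    using g by (auto simp: geom_real_points_def)
qed

lemma sum_pushforward:
  "(\<And>x. x \<in> P \<Longrightarrow> f x \<in> P) \<Longrightarrow> sum (pushforward P f g) P = sum g P"
  unfolding pushforward_def by (rule sum.group[OF finite_P finite_P]) auto

lemma pushforward_eq_0: "(\<And>x. x \<in> P \<Longrightarrow> f x \<in> P) \<Longrightarrow> z \<notin> P \<Longrightarrow> pushforward P f g z = 0"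
  unfolding pushforward_def by (rule sum.neutral) auto

text \<open>Lay the support chain of \<open>g\<close> out on \<open>[0, 1]\<close> from the top down, so that \<open>x\<close> occupies
  \<open>[mass_strictly_above x, mass_above x]\<close>. At time \<open>t\<close> the part of this interval below \<open>t\<close>
  is sent to \<open>\<psi> x\<close> and the rest to \<open>\<phi> x\<close>. Because the intervals are ordered like the chain
  and \<open>\<phi> \<le> \<psi>\<close>, the image is again supported on a chain.\<close>

definition part_below :: "real \<Rightarrow> ('a \<Rightarrow> real) \<Rightarrow> 'a \<Rightarrow> real" where
  "part_below t g x = min (mass_above P le g x) t - min (mass_strictly_above P le g x) t"

definition part_above :: "real \<Rightarrow> ('a \<Rightarrow> real) \<Rightarrow> 'a \<Rightarrow> real" where
  "part_above t g x = max (mass_above P le g x) t - max (mass_strictly_above P le g x) t"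

definition order_homotopy :: "('a \<Rightarrow> 'a) \<Rightarrow> ('a \<Rightarrow> 'a) \<Rightarrow> real \<times> ('a \<Rightarrow> real) \<Rightarrow> 'a \<Rightarrow> real" where
  "order_homotopy \<phi> \<psi> = (\<lambda>(t, g) z.
     pushforward P \<psi> (part_below t g) z + pushforward P \<phi> (part_above t g) z)"

lemma part_below_plus_part_above: "x \<in> P \<Longrightarrow> part_below t g x + part_above t g x = g x"
  using mass_above_split unfolding part_below_def part_above_def by auto

context
  fixes g assumes g: "g \<in> geom_real_points P le"
begin

lemma geom_real_points_nonneg: "0 \<le> g x"
  using g by (simp add: geom_real_points_def)

lemma part_below_nonneg: "x \<in> P \<Longrightarrow> 0 \<le> part_below t g x"
  and part_above_nonneg: "x \<in> P \<Longrightarrow> 0 \<le> part_above t g x"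
  using mass_above_split[of x g] geom_real_points_nonneg[of x] unfolding part_below_def part_above_def
  by (auto simp: min_def max_def)

lemma part_below_nonzero:
  assumes "x \<in> P" "part_below t g x \<noteq> 0"
  shows "g x \<noteq> 0" "mass_strictly_above P le g x < t"
  using assms mass_above_split[of x g] geom_real_points_nonneg[of x] unfolding part_below_def
  by (auto simp: min_def split: if_splits)

lemma part_above_nonzero:
  assumes "x \<in> P" "part_above t g x \<noteq> 0"
  shows "g x \<noteq> 0" "t < mass_above P le g x"
  using assms mass_above_split[of x g] geom_real_points_nonneg[of x] unfolding part_above_def
  by (auto simp: max_def split: if_splits)

lemma le_of_part_above_part_below:
  assumes "x \<in> P" "x' \<in> P" "part_below t g x \<noteq> 0" "part_above t g x' \<noteq> 0"
  shows "le x' x"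
proof (rule ccontr)
  assume "\<not> le x' x"
  moreover have "g x \<noteq> 0" "g x' \<noteq> 0"
    using part_below_nonzero(1) part_above_nonzero(1) assms by blast+
  ultimately have "le x x'" "x \<noteq> x'" using g reflexive assms(1) by (auto simp: geom_real_points_def)
  then have "mass_above P le g x' \<le> mass_strictly_above P le g x"
    using mass_above_le_mass_strictly_above[OF g assms(1,2)] by simp
  then show False using part_below_nonzero(2) part_above_nonzero(2) assms by fastforce
qed

end

context
  fixes \<phi> \<psi> :: "'a \<Rightarrow> 'a"
  assumes maps_\<phi>: "\<And>x. x \<in> P \<Longrightarrow> \<phi> x \<in> P" and maps_\<psi>: "\<And>x. x \<in> P \<Longrightarrow> \<psi> x \<in> P"
    and mono_\<phi>: "\<And>x y. x \<in> P \<Longrightarrow> y \<in> P \<Longrightarrow> le x y \<Longrightarrow> le (\<phi> x) (\<phi> y)"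
    and mono_\<psi>: "\<And>x y. x \<in> P \<Longrightarrow> y \<in> P \<Longrightarrow> le x y \<Longrightarrow> le (\<psi> x) (\<psi> y)"
    and \<phi>_le_\<psi>: "\<And>x. x \<in> P \<Longrightarrow> le (\<phi> x) (\<psi> x)"
begin

lemma order_homotopy_in_geom_real_points:
  assumes g: "g \<in> geom_real_points P le"
  shows "order_homotopy \<phi> \<psi> (t, g) \<in> geom_real_points P le"
proof -
  define \<alpha> where "\<alpha> = part_below t g"
  define \<beta> where "\<beta> = part_above t g"
  define h where "h = order_homotopy \<phi> \<psi> (t, g)"
  have h: "h z = pushforward P \<psi> \<alpha> z + pushforward P \<phi> \<beta> z" for z
    unfolding h_def order_homotopy_def \<alpha>_def \<beta>_def by simp
  have support: "\<exists>x\<in>P. \<psi> x = z \<and> \<alpha> x \<noteq> 0 \<or> \<phi> x = z \<and> \<beta> x \<noteq> 0" if hz: "h z \<noteq> 0" for z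
  proof -
    consider "pushforward P \<psi> \<alpha> z \<noteq> 0" | "pushforward P \<phi> \<beta> z \<noteq> 0" using hz h by force
    then show ?thesis by cases (blast dest: pushforward_nonzero)+
  qed
  have chain: "le x y \<or> le y x"
    if "x \<in> P" "y \<in> P" "\<alpha> x \<noteq> 0 \<or> \<beta> x \<noteq> 0" "\<alpha> y \<noteq> 0 \<or> \<beta> y \<noteq> 0" for x y
  proof -
    have "g x \<noteq> 0" "g y \<noteq> 0"
      using that part_below_nonzero(1)[OF g] part_above_nonzero(1)[OF g] unfolding \<alpha>_def \<beta>_def
      by blast+
    then show ?thesis using g by (simp add: geom_real_points_def)
  qed
  have cross: "le (\<phi> x') (\<psi> x)" if "x \<in> P" "x' \<in> P" "\<alpha> x \<noteq> 0" "\<beta> x' \<noteq> 0" for x x'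
    using le_of_part_above_part_below[OF g that[unfolded \<alpha>_def \<beta>_def]] that
      transitive[OF maps_\<phi> maps_\<phi> maps_\<psi> mono_\<phi> \<phi>_le_\<psi>]
    by blast
  show ?thesis
    unfolding h_def[symmetric]
  proof (rule geom_real_pointsI[OF finite_P])
    show "0 \<le> h z" for z
      unfolding h pushforward_def \<alpha>_def \<beta>_def
      by (intro add_nonneg_nonneg sum_nonneg) (auto simp: part_below_nonneg[OF g]
        part_above_nonneg[OF g])
    show "h z = 0" if "z \<notin> P" for z
      unfolding h using that maps_\<phi> maps_\<psi> by (simp add: pushforward_eq_0)
    have "sum h P = sum \<alpha> P + sum \<beta> P"
      unfolding h sum.distrib using maps_\<phi> maps_\<psi> by (simp add: sum_pushforward)
    also have "\<dots> = sum g P"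
      unfolding \<alpha>_def \<beta>_def sum.distrib[symmetric] by (simp add: part_below_plus_part_above)
    also have "\<dots> = 1" using sum_geom_real_points[OF finite_P g] .
    finally show "sum h P = 1" .
    show "le z w \<or> le w z" if hz: "h z \<noteq> 0" and hw: "h w \<noteq> 0" for z w
    proof -
      obtain x where x: "x \<in> P" "\<psi> x = z \<and> \<alpha> x \<noteq> 0 \<or> \<phi> x = z \<and> \<beta> x \<noteq> 0"
        using support[OF hz] by blast
      obtain y where y: "y \<in> P" "\<psi> y = w \<and> \<alpha> y \<noteq> 0 \<or> \<phi> y = w \<and> \<beta> y \<noteq> 0"
        using support[OF hw] by blast
      have xy: "le x y \<or> le y x" using chain x y by blast
      from x(2) y(2) show ?thesis
      proof (elim disjE conjE)
        assume "\<psi> x = z" "\<psi> y = w" then show ?thesis using xy mono_\<psi> x y by blast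
      next
        assume "\<phi> x = z" "\<phi> y = w" then show ?thesis using xy mono_\<phi> x y by blast
      next
        assume "\<psi> x = z" "\<alpha> x \<noteq> 0" "\<phi> y = w" "\<beta> y \<noteq> 0"
        then show ?thesis using cross[of x y] x y by blast
      next
        assume "\<phi> x = z" "\<beta> x \<noteq> 0" "\<psi> y = w" "\<alpha> y \<noteq> 0"
        then show ?thesis using cross[of y x] x y by blast
      qed
    qed
  qed
qed

lemma continuous_map_order_homotopy:
  "continuous_map (prod_topology (top_of_set {0..1}) (geom_real P le)) (geom_real P le)
     (order_homotopy \<phi> \<psi>)"
proof -
  let ?X = "prod_topology (top_of_set {0..1::real}) (geom_real P le)"
  have time: "continuous_map ?X euclideanreal fst"
    using continuous_map_compose[OF continuous_map_fst continuous_map_from_subtopology[OF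
      continuous_map_id]]
    by (simp add: o_def)
  have coord: "continuous_map ?X euclideanreal (\<lambda>tg. snd tg y)" for y
    using continuous_map_compose[OF continuous_map_snd continuous_map_geom_real_coordinate]
    by (simp add: o_def)
  have mass: "continuous_map ?X euclideanreal (\<lambda>tg. mass_above P le (snd tg) x)"
    "continuous_map ?X euclideanreal (\<lambda>tg. mass_strictly_above P le (snd tg) x)" for x
    unfolding mass_above_def mass_strictly_above_def
    by (intro continuous_map_sum coord, simp add: finite_P)+
  have "continuous_map ?X (powertop_real UNIV) (order_homotopy \<phi> \<psi>)"
    unfolding continuous_map_componentwise_UNIV order_homotopy_def case_prod_beta pushforward_def
      part_below_def part_above_def
    by (intro allI continuous_map_sum continuous_map_add finite_Collect_conjI finite_P
        continuous_map_diff continuous_map_real_min continuous_map_real_max mass time)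
      (simp_all add: finite_P)
  moreover have "order_homotopy \<phi> \<psi> tg \<in> geom_real_points P le" if "tg \<in> topspace ?X" for tg
    using that order_homotopy_in_geom_real_points by (cases tg) auto
  ultimately show ?thesis
    by (simp add: geom_real_eq continuous_map_in_subtopology image_subset_iff)
qed

lemma order_homotopy_0:
  assumes "g \<in> geom_real_points P le"
  shows "order_homotopy \<phi> \<psi> (0, g) = pushforward P \<phi> g"
proof -
  have "part_below 0 g x = 0" "part_above 0 g x = g x" if "x \<in> P" for x
    using mass_strictly_above_nonneg[OF assms, of x] mass_above_split[OF that, of g] assms
    by (auto simp: part_below_def part_above_def geom_real_points_def)
  then show ?thesis
    unfolding order_homotopy_def pushforward_def by (auto intro!: ext sum.neutral sum.cong)
qed

lemma order_homotopy_1: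
  assumes "g \<in> geom_real_points P le"
  shows "order_homotopy \<phi> \<psi> (1, g) = pushforward P \<psi> g"
proof -
  have "part_below 1 g x = g x" "part_above 1 g x = 0" if "x \<in> P" for x
  proof -
    have "0 \<le> g x" using assms by (simp add: geom_real_points_def)
    then show "part_below 1 g x = g x" "part_above 1 g x = 0"
      using mass_above_le_1[OF assms, of x] mass_strictly_above_nonneg[OF assms, of x]
        mass_above_split[OF that, of g]
      by (auto simp: part_below_def part_above_def)
  qed
  then show ?thesis
    unfolding order_homotopy_def pushforward_def by (auto intro!: ext sum.neutral sum.cong)
qed

lemma homotopic_pushforward:
  "homotopic_with (\<lambda>_. True) (geom_real P le) (geom_real P le) (pushforward P \<phi>) (pushforward P \<psi>)"
proof -
  have "homotopic_with (\<lambda>_. True) (geom_real P le) (geom_real P le)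
      (\<lambda>g. order_homotopy \<phi> \<psi> (0, g)) (\<lambda>g. order_homotopy \<phi> \<psi> (1, g))"
    unfolding homotopic_with_def using continuous_map_order_homotopy by auto
  then show ?thesis
    by (rule homotopic_with_eq) (auto simp: order_homotopy_0 order_homotopy_1)
qed

end

lemma contractible_space_geom_real_zigzag:
  assumes maps: "\<And>j x. x \<in> P \<Longrightarrow> f j x \<in> P"
    and mono: "\<And>j x y. x \<in> P \<Longrightarrow> y \<in> P \<Longrightarrow> le x y \<Longrightarrow> le (f j x) (f j y)"
    and start: "\<And>x. x \<in> P \<Longrightarrow> f 0 x = x"
    and finish: "\<And>x. x \<in> P \<Longrightarrow> f m x = c"
    and step: "\<And>j. j < m \<Longrightarrow>
      (\<forall>x\<in>P. le (f j x) (f (Suc j) x)) \<or> (\<forall>x\<in>P. le (f (Suc j) x) (f j x))"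
  shows "contractible_space (geom_real P le)"
proof -
  let ?X = "geom_real P le"
  have homotopic: "homotopic_with (\<lambda>_. True) ?X ?X id (pushforward P (f j))" if "j \<le> m" for j
    using that
  proof (induction j)
    case 0
    show ?case
      by (rule homotopic_with_equal) (auto simp: pushforward_id start)
  next
    case (Suc j)
    then have j: "j < m" by simp
    have "homotopic_with (\<lambda>_. True) ?X ?X (pushforward P (f j)) (pushforward P (f (Suc j)))"
      using step[OF j]
    proof
      assume "\<forall>x\<in>P. le (f j x) (f (Suc j) x)"
      then show ?thesis by (intro homotopic_pushforward) (auto intro: maps mono)
    next
      assume "\<forall>x\<in>P. le (f (Suc j) x) (f j x)"
      then have "homotopic_with (\<lambda>_. True) ?X ?X (pushforward P (f (Suc j))) (pushforward P (f j))"
        by (intro homotopic_pushforward) (auto intro: maps mono)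
      then show ?thesis by (rule homotopic_with_symD)
    qed
    then show ?case using Suc.IH j homotopic_with_trans by fastforce
  qed
  have "homotopic_with (\<lambda>_. True) ?X ?X id (\<lambda>_ z. if z = c then 1 else 0)"
    by (rule homotopic_with_eq[OF homotopic[OF order_refl]])
      (auto simp: pushforward_const[OF finite_P] finish)
  then show ?thesis unfolding contractible_space_def by blast
qed

text \<open>The zigzag may be given on a parameter space \<open>D\<close> that maps onto \<open>P\<close> by an order
  embedding; only the final stage has to be constant on \<open>P\<close>, not on \<open>D\<close>.\<close>

lemma contractible_space_geom_real_param_zigzag:
  fixes par :: "'d \<Rightarrow> 'a" and leD :: "'d \<Rightarrow> 'd \<Rightarrow> bool"
  assumes P_eq: "P = par ` D"
    and embedding: "\<And>u v. u \<in> D \<Longrightarrow> v \<in> D \<Longrightarrow> le (par u) (par v) \<longleftrightarrow> leD u v"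
    and maps: "\<And>j u. u \<in> D \<Longrightarrow> G j u \<in> D"
    and mono: "\<And>j u v. u \<in> D \<Longrightarrow> v \<in> D \<Longrightarrow> leD u v \<Longrightarrow> leD (G j u) (G j v)"
    and start: "\<And>u. u \<in> D \<Longrightarrow> par (G 0 u) = par u"
    and finish: "\<And>u. u \<in> D \<Longrightarrow> par (G m u) = c"
    and step: "\<And>j. j < m \<Longrightarrow>
      (\<forall>u\<in>D. leD (G j u) (G (Suc j) u)) \<or> (\<forall>u\<in>D. leD (G (Suc j) u) (G j u))"
  shows "contractible_space (geom_real P le)"
proof -
  define sec where "sec x = (SOME u. u \<in> D \<and> par u = x)" for x
  have sec: "sec x \<in> D" "par (sec x) = x" if "x \<in> P" for x
    using someI_ex[of "\<lambda>u. u \<in> D \<and> par u = x"] that P_eq unfolding sec_def by blast+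
  show ?thesis
  proof (rule contractible_space_geom_real_zigzag[of "\<lambda>j x. par (G j (sec x))" m c])
    show "par (G j (sec x)) \<in> P" if "x \<in> P" for j x
      using sec[OF that] maps P_eq by blast
    show "le (par (G j (sec x))) (par (G j (sec y)))" if "x \<in> P" "y \<in> P" "le x y" for j x y
      using that sec embedding maps mono by metis
    show "par (G 0 (sec x)) = x" if "x \<in> P" for x using start sec[OF that] by simp
    show "par (G m (sec x)) = c" if "x \<in> P" for x using finish sec[OF that] by simp
    show "(\<forall>x\<in>P. le (par (G j (sec x))) (par (G (Suc j) (sec x)))) \<or>
          (\<forall>x\<in>P. le (par (G (Suc j) (sec x))) (par (G j (sec x))))" if "j < m" for j
      using step[OF that] sec embedding maps by metis
  qed
qed

end

lemma continuous_map_geom_real_compose_involution: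
  assumes invol: "\<And>x. f (f x) = x" and le_f: "\<And>x y. le (f x) (f y) \<longleftrightarrow> le x y"
  shows "continuous_map (geom_real (f ` P) le) (geom_real P le) (\<lambda>g. g \<circ> f)"
proof -
  have inj: "inj f" by (metis injI invol)
  have "g \<circ> f \<in> geom_real_points P le" if g: "g \<in> geom_real_points (f ` P) le" for g
  proof -
    have supp: "{x. g (f x) \<noteq> 0} = f ` {y. g y \<noteq> 0}"
    proof (rule set_eqI)
      show "x \<in> {x. g (f x) \<noteq> 0} \<longleftrightarrow> x \<in> f ` {y. g y \<noteq> 0}" for x
        using image_eqI[of x f "f x" "{y. g y \<noteq> 0}"] by (auto simp: invol)
    qed
    have "x \<notin> P \<Longrightarrow> g (f x) = 0" for x
      using g inj by (auto simp: geom_real_points_def inj_image_mem_iff)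
    moreover have "finite {x. g (f x) \<noteq> 0}"
      unfolding supp using g by (simp add: geom_real_points_def)
    moreover have "(\<Sum>x | g (f x) \<noteq> 0. g (f x)) = 1"
      unfolding supp using g
      by (simp add: sum.reindex inj_on_subset[OF inj] invol geom_real_points_def)
    moreover have "le x y \<or> le y x" if "g (f x) \<noteq> 0" "g (f y) \<noteq> 0" for x y
      using g that le_f[of x y] le_f[of y x] by (auto simp: geom_real_points_def)
    ultimately show ?thesis
      using g unfolding geom_real_points_def comp_def by auto
  qed
  moreover have "continuous_map (geom_real (f ` P) le) (powertop_real UNIV) (\<lambda>g. g \<circ> f)"
    by (auto simp: continuous_map_componentwise_UNIV continuous_map_geom_real_coordinate)
  ultimately show ?thesis
    by (simp add: geom_real_eq continuous_map_in_subtopology image_subset_iff)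
qed

lemma homeomorphic_space_geom_real_involution:
  assumes invol: "\<And>x. f (f x) = x" and le_f: "\<And>x y. le (f x) (f y) \<longleftrightarrow> le x y"
  shows "geom_real (f ` P) le homeomorphic_space geom_real P le"
proof -
  have "f ` f ` P = P" using invol by (force simp: image_iff)
  then have "homeomorphic_maps (geom_real (f ` P) le) (geom_real P le) (\<lambda>g. g \<circ> f) (\<lambda>g. g \<circ> f)"
    unfolding homeomorphic_maps_def
    using continuous_map_geom_real_compose_involution[where f = f and le = le and P = P, OF assms]
      continuous_map_geom_real_compose_involution[where f = f and le = le and P = "f ` P", OF assms]
    by (simp add: o_assoc[symmetric] invol comp_def)
  then show ?thesis unfolding homeomorphic_space_def by blast
qed

section \<open>Strings given by block data\<close>

fun other_bit :: "sym \<Rightarrow> sym" where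
  "other_bit S0 = S1" | "other_bit S1 = S0" | "other_bit SX = SX"

definition alt_bit :: "sym \<Rightarrow> nat \<Rightarrow> sym" where
  "alt_bit a i = (if even i then a else other_bit a)"

lemma alt_bit_parity: "even i \<longleftrightarrow> even j \<Longrightarrow> alt_bit a i = alt_bit a j"
  by (simp add: alt_bit_def)

lemma alt_bit_not_X: "a \<noteq> SX \<Longrightarrow> alt_bit a i \<noteq> SX"
  by (cases a) (auto simp: alt_bit_def)

lemma alt_bit_eq_iff: "a \<noteq> SX \<Longrightarrow> alt_bit a i = alt_bit a j \<longleftrightarrow> (even i \<longleftrightarrow> even j)"
  by (cases a) (auto simp: alt_bit_def)

lemma alt_bit_Suc: "alt_bit a (Suc i) = other_bit (alt_bit a i)"
  by (cases a) (auto simp: alt_bit_def)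

lemma alt_bit_alt_bit: "alt_bit (alt_bit a i) j = alt_bit a (i + j)"
  by (cases a) (auto simp: alt_bit_def)

lemma eq_other_bit: "x \<noteq> SX \<Longrightarrow> y \<noteq> SX \<Longrightarrow> x \<noteq> y \<Longrightarrow> x = other_bit y"
  by (cases x; cases y) auto

lemma card_alt_bit:
  assumes "a \<noteq> SX" "c \<noteq> SX"
  shows "card {l. l < 2 * M \<and> alt_bit a l = c} = M"
proof (induction M)
  case (Suc M)
  define new where "new = {l. (l = 2 * M \<or> l = Suc (2 * M)) \<and> alt_bit a l = c}"
  have "new = (if c = a then {2 * M} else {Suc (2 * M)})"
    using assms unfolding new_def by (cases a; cases c) (auto simp: alt_bit_def)
  then have "card new = 1" by simp
  moreover have "{l. l < 2 * Suc M \<and> alt_bit a l = c} = {l. l < 2 * M \<and> alt_bit a l = c} \<union> new"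
    unfolding new_def by auto
  moreover have "{l. l < 2 * M \<and> alt_bit a l = c} \<inter> new = {}"
    unfolding new_def by auto
  ultimately show ?case
    using Suc.IH card_Un_disjoint[of "{l. l < 2 * M \<and> alt_bit a l = c}" new]
    by (simp add: new_def)
qed simp

text \<open>A string of length \<open>N\<close> with \<open>K\<close> bit blocks is encoded by the block boundaries: block
  \<open>i\<close> occupies the positions \<open>A i .. B i\<close> and carries the bit \<open>alt_bit a i\<close>; all other
  positions are \<open>X\<close>.\<close>

definition block_data :: "nat \<Rightarrow> nat \<Rightarrow> (nat \<Rightarrow> nat) \<Rightarrow> (nat \<Rightarrow> nat) \<Rightarrow> bool" where
  "block_data N K A B \<longleftrightarrow> (\<forall>i<K. A i \<le> B i \<and> B i < N) \<and> (\<forall>i. Suc i < K \<longrightarrow> B i < A (Suc i))"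

lemma block_dataD:
  assumes "block_data N K A B"
  shows "i < K \<Longrightarrow> A i \<le> B i" and "i < K \<Longrightarrow> B i < N" and "Suc i < K \<Longrightarrow> B i < A (Suc i)"
  using assms by (simp_all add: block_data_def)

definition in_block :: "nat \<Rightarrow> (nat \<Rightarrow> nat) \<Rightarrow> (nat \<Rightarrow> nat) \<Rightarrow> nat \<Rightarrow> nat \<Rightarrow> bool" where
  "in_block K A B p i \<longleftrightarrow> i < K \<and> A i \<le> p \<and> p \<le> B i"

definition block_sym :: "nat \<Rightarrow> sym \<Rightarrow> (nat \<Rightarrow> nat) \<Rightarrow> (nat \<Rightarrow> nat) \<Rightarrow> nat \<Rightarrow> sym" where
  "block_sym K a A B p
      = (if \<exists>i. in_block K A B p i then alt_bit a (SOME i. in_block K A B p i) else SX)"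

definition block_string :: "nat \<Rightarrow> nat \<Rightarrow> sym \<Rightarrow> (nat \<Rightarrow> nat) \<Rightarrow> (nat \<Rightarrow> nat) \<Rightarrow> sym list" where
  "block_string N K a A B = map (block_sym K a A B) [0..<N]"

lemma length_block_string [simp]: "length (block_string N K a A B) = N"
  by (simp add: block_string_def)

lemma nth_block_string [simp]: "p < N \<Longrightarrow> block_string N K a A B ! p = block_sym K a A B p"
  by (simp add: block_string_def)

lemma block_string_Suc:
  "block_string (Suc N) K a A B = block_string N K a A B @ [block_sym K a A B N]"
  by (simp add: block_string_def)

lemma block_string_cong:
  assumes "\<And>p i. p < N \<Longrightarrow> in_block K A B p i \<longleftrightarrow> in_block K' A' B' p i"
  shows "block_string N K a A B = block_string N K' a A' B'"
proof -
  have "block_sym K a A B p = block_sym K' a A' B' p" if "p < N" for p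
    using assms[OF that] unfolding block_sym_def by presburger
  then show ?thesis unfolding block_string_def by simp
qed

lemma block_data_B_less_A: "block_data N K A B \<Longrightarrow> i < j \<Longrightarrow> j < K \<Longrightarrow> B i < A j"
proof (induction j)
  case (Suc j)
  show ?case
  proof (cases "i = j")
    case False
    then have "B i < A j" using Suc by simp
    moreover have "A j \<le> B j" "B j < A (Suc j)" using Suc.prems by (auto simp: block_data_def)
    ultimately show ?thesis by simp
  qed (use Suc.prems in \<open>auto simp: block_data_def\<close>)
qed simp

lemma block_data_A_less:
  assumes "block_data N K A B" "i < j" "j < K"
  shows "A i < A j"
proof -
  have "A i \<le> B i" using assms by (simp add: block_data_def)
  then show ?thesis using block_data_B_less_A[OF assms] by linarith
qed

lemma block_data_B_less:
  assumes "block_data N K A B" "i < j" "j < K"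
  shows "B i < B j"
proof -
  have "A j \<le> B j" using assms by (simp add: block_data_def)
  then show ?thesis using block_data_B_less_A[OF assms] by linarith
qed

lemma block_data_A_le: "block_data N K A B \<Longrightarrow> i \<le> j \<Longrightarrow> j < K \<Longrightarrow> A i \<le> A j"
  using block_data_A_less[of N K A B i j] by (cases "i = j") auto

lemma block_data_B_le: "block_data N K A B \<Longrightarrow> i \<le> j \<Longrightarrow> j < K \<Longrightarrow> B i \<le> B j"
  using block_data_B_less[of N K A B i j] by (cases "i = j") auto

lemma block_data_mono: "block_data N K A B \<Longrightarrow> N \<le> N' \<Longrightarrow> block_data N' K A B"
  unfolding block_data_def by (auto intro: less_le_trans)

lemma in_block_less: "block_data N K A B \<Longrightarrow> in_block K A B p i \<Longrightarrow> p < N"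
  unfolding block_data_def in_block_def by (auto intro: le_less_trans)

lemma in_block_A: "block_data N K A B \<Longrightarrow> i < K \<Longrightarrow> in_block K A B (A i) i"
  and in_block_B: "block_data N K A B \<Longrightarrow> i < K \<Longrightarrow> in_block K A B (B i) i"
  by (auto simp: block_data_def in_block_def)

lemma in_block_unique:
  assumes d: "block_data N K A B" and "in_block K A B p i" "in_block K A B p j"
  shows "i = j"
proof (rule ccontr)
  have separated: "\<not> (in_block K A B p i' \<and> in_block K A B p j')" if "i' < j'" for i' j'
    using block_data_B_less_A[OF d that] by (auto simp: in_block_def)
  assume "i \<noteq> j"
  then consider "i < j" | "j < i" by linarith
  then show False using separated assms(2,3) by cases blast+
qed

lemma block_sym_in_block:
  assumes "block_data N K A B" "in_block K A B p i"
  shows "block_sym K a A B p = alt_bit a i"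
proof -
  have "(SOME j. in_block K A B p j) = i"
    using assms by (intro some_equality) (auto intro: in_block_unique)
  then show ?thesis using assms(2) unfolding block_sym_def by auto
qed

lemma block_sym_outside: "(\<And>i. \<not> in_block K A B p i) \<Longrightarrow> block_sym K a A B p = SX"
  unfolding block_sym_def by auto

lemma block_sym_eq_X_iff:
  assumes "block_data N K A B" "a \<noteq> SX"
  shows "block_sym K a A B p = SX \<longleftrightarrow> (\<forall>i. \<not> in_block K A B p i)"
proof (cases "\<exists>i. in_block K A B p i")
  case True
  then obtain i where i: "in_block K A B p i" by blast
  then have "block_sym K a A B p = alt_bit a i" by (rule block_sym_in_block[OF assms(1)])
  then show ?thesis using i alt_bit_not_X[OF assms(2)] by auto
qed (auto intro: block_sym_outside)

lemma block_sym_bit: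
  assumes "block_data N K A B" "a \<noteq> SX" "block_sym K a A B p \<noteq> SX"
  obtains i where "in_block K A B p i" "block_sym K a A B p = alt_bit a i"
proof -
  obtain i where "in_block K A B p i" using block_sym_eq_X_iff[OF assms(1,2)] assms(3) by blast
  then show thesis using that block_sym_in_block[OF assms(1)] by blast
qed

lemma strle_block_string:
  assumes d: "block_data N K A B" and d': "block_data N K A' B'" and a: "a \<noteq> SX"
    and le: "\<And>i. i < K \<Longrightarrow> A i \<le> A' i \<and> B' i \<le> B i"
  shows "strle (block_string N K a A B) (block_string N K a A' B')"
  unfolding strle_def
proof (intro conjI allI impI)
  fix p assume "p < length (block_string N K a A' B')"
  then have p: "p < N" by simp
  show "block_string N K a A B ! p = block_string N K a A' B' ! p \<or> block_string N K a A' B' ! p = SX"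
  proof (cases "block_sym K a A' B' p = SX")
    case False
    then obtain i where i: "in_block K A' B' p i" "block_sym K a A' B' p = alt_bit a i"
      using block_sym_bit[OF d' a] by blast
    then have "in_block K A B p i" using le[of i] by (auto simp: in_block_def)
    then show ?thesis using block_sym_in_block[OF d] i p by simp
  qed (use p in simp)
qed simp

context
  fixes N K :: nat and a :: sym and A B A' B' :: "nat \<Rightarrow> nat"
  assumes d: "block_data N K A B" and d': "block_data N K A' B'" and a: "a \<noteq> SX"
    and le: "strle (block_string N K a A B) (block_string N K a A' B')"
begin

lemma in_coarser_block:
  assumes "in_block K A' B' p i"
  obtains j where "in_block K A B p j" "even j \<longleftrightarrow> even i"
proof -
  have p: "p < N" using in_block_less[OF d' assms] .
  have "block_sym K a A' B' p = alt_bit a i" using block_sym_in_block[OF d' assms] .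
  moreover have "block_sym K a A B p = block_sym K a A' B' p \<or> block_sym K a A' B' p = SX"
    using le p unfolding strle_def by auto
  ultimately have i: "block_sym K a A B p = alt_bit a i" using alt_bit_not_X[OF a] by auto
  then have "block_sym K a A B p \<noteq> SX" using alt_bit_not_X[OF a] by simp
  then obtain j where "in_block K A B p j" "block_sym K a A B p = alt_bit a j"
    using block_sym_bit[OF d a] by blast
  then show thesis using that i alt_bit_eq_iff[OF a] by auto
qed

lemma A'_in_later_block: "i < K \<Longrightarrow> \<exists>j. in_block K A B (A' i) j \<and> i \<le> j \<and> (even j \<longleftrightarrow> even i)"
proof (induction i)
  case 0
  then show ?case using in_coarser_block[OF in_block_A[OF d' 0]] by blast
next
  case (Suc i)
  then obtain j0 where j0: "in_block K A B (A' i) j0" "i \<le> j0" "even j0 \<longleftrightarrow> even i" by auto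
  obtain j where j: "in_block K A B (A' (Suc i)) j" "even j \<longleftrightarrow> even (Suc i)"
    using in_coarser_block[OF in_block_A[OF d' Suc.prems]] by blast
  have "A' i < A' (Suc i)" using block_data_A_less[OF d' _ Suc.prems] by simp
  moreover have "j \<noteq> j0" using j(2) j0(3) by auto
  moreover have "\<not> j < j0"
  proof
    assume "j < j0"
    then have "B j < A j0" using block_data_B_less_A[OF d] j0(1) by (auto simp: in_block_def)
    then show False using j(1) j0(1) \<open>A' i < A' (Suc i)\<close> by (auto simp: in_block_def)
  qed
  ultimately show ?case using j j0 by auto
qed

lemma B'_in_earlier_block: "i < K \<Longrightarrow> \<exists>j. in_block K A B (B' i) j \<and> j \<le> i \<and> (even j \<longleftrightarrow> even i)"
proof (induction "K - Suc i" arbitrary: i)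
  case 0
  obtain j where j: "in_block K A B (B' i) j" "even j \<longleftrightarrow> even i"
    using in_coarser_block[OF in_block_B[OF d' \<open>i < K\<close>]] by blast
  have "j \<le> i" using j(1) 0 by (auto simp: in_block_def)
  then show ?case using j by blast
next
  case (Suc d i)
  then have i: "Suc i < K" by simp
  moreover have "d = K - Suc (Suc i)" using Suc.hyps(2) by arith
  ultimately obtain j0 where j0: "in_block K A B (B' (Suc i)) j0" "j0 \<le> Suc i" "even j0 \<longleftrightarrow> even (Suc i)"
    using Suc.hyps(1)[of "Suc i"] by blast
  obtain j where j: "in_block K A B (B' i) j" "even j \<longleftrightarrow> even i"
    using in_coarser_block[OF in_block_B[OF d' Suc.prems]] by blast
  have "B' i < B' (Suc i)" using block_data_B_less[OF d' _ i] by simp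
  moreover have "j \<noteq> j0" using j(2) j0(3) by auto
  moreover have "\<not> j0 < j"
  proof
    assume "j0 < j"
    then have "B j0 < A j" using block_data_B_less_A[OF d] j(1) by (auto simp: in_block_def)
    then show False using j(1) j0(1) \<open>B' i < B' (Suc i)\<close> by (auto simp: in_block_def)
  qed
  ultimately show ?case using j j0 by auto
qed

lemma strle_block_string_le: "i < K \<Longrightarrow> A i \<le> A' i \<and> B' i \<le> B i"
proof -
  assume i: "i < K"
  obtain j where j: "in_block K A B (A' i) j" "i \<le> j" using A'_in_later_block[OF i] by blast
  obtain j' where j': "in_block K A B (B' i) j'" "j' \<le> i" using B'_in_earlier_block[OF i] by blast
  have "A i \<le> A j" "B j' \<le> B i"
    using block_data_A_le[OF d j(2)] block_data_B_le[OF d j'(2) i] j by (auto simp: in_block_def)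
  then show ?thesis using j j' by (auto simp: in_block_def)
qed

end

lemma strle_block_string_iff:
  assumes "block_data N K A B" "block_data N K A' B'" "a \<noteq> SX"
  shows "strle (block_string N K a A B) (block_string N K a A' B') \<longleftrightarrow>
    (\<forall>i<K. A i \<le> A' i \<and> B' i \<le> B i)"
  using strle_block_string[OF assms] strle_block_string_le[OF assms] by blast

section \<open>Strings with an \<open>X\<close> at one end\<close>

lemma cat_nth: "0 < length s \<Longrightarrow> cat s (int k) = s ! (k mod length s)"
  unfolding cat_def by (simp add: zmod_int[symmetric] nat_int)

lemma cat_add: "0 < length s \<Longrightarrow> cat s (int i + int t) = s ! ((i + t) mod length s)"
  using cat_nth[of s "i + t"] by simp

lemma cat_pred:
  assumes "0 < length s" "i < length s"
  shows "cat s (int i - 1) = s ! (if i = 0 then length s - 1 else i - 1)"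
proof (cases "i = 0")
  case True
  have "(-1::int) mod int (length s) = int (length s - 1)"
    using assms(1) by (simp add: zmod_minus1 of_nat_diff Suc_le_eq)
  then show ?thesis unfolding cat_def True by simp
next
  case False
  then have "int i - 1 = int (i - 1)" by simp
  then show ?thesis using False assms cat_nth[of s "i - 1"] by simp
qed

text \<open>A maximal cyclic run of \<open>X\<close> either lies strictly inside the string or wraps around its
  end; \<open>xblocks_ok\<close> is checked separately in the two situations.\<close>

lemma xblocks_okI:
  assumes L: "0 < length s"
    and inner: "\<And>p q. Suc p < q \<Longrightarrow> q < length s \<Longrightarrow> s ! p \<noteq> SX \<Longrightarrow> s ! q \<noteq> SX \<Longrightarrow>
      (\<And>r. p < r \<Longrightarrow> r < q \<Longrightarrow> s ! r = SX) \<Longrightarrow> s ! p \<noteq> s ! q"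
    and wrap: "\<And>p q. p < length s \<Longrightarrow> q < length s \<Longrightarrow> s ! p \<noteq> SX \<Longrightarrow> s ! q \<noteq> SX \<Longrightarrow>
      (\<And>r. p < r \<Longrightarrow> r < length s \<Longrightarrow> s ! r = SX) \<Longrightarrow> (\<And>r. r < q \<Longrightarrow> s ! r = SX) \<Longrightarrow>
      s ! p \<noteq> s ! q"
  shows "xblocks_ok s"
  unfolding xblocks_ok_def
proof (intro allI impI, elim conjE)
  fix i d
  define N where "N = length s"
  assume iN: "i < length s" and d0: "0 < d" and h1: "cat s (int i - 1) \<noteq> SX"
    and h2: "\<forall>t<d. cat s (int i + int t) = SX" and h3: "cat s (int i + int d) \<noteq> SX"
  have N0: "0 < N" using L by (simp add: N_def)
  have run: "s ! ((i + t) mod N) = SX" if "t < d" for t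
    using h2 that cat_add[OF L, of i t] by (simp add: N_def)
  have last: "cat s (int i + int d) = s ! ((i + d) mod N)"
    using cat_add[OF L, of i d] by (simp add: N_def)
  show "cat s (int i - 1) \<noteq> cat s (int i + int d)"
  proof (cases "i = 0")
    case True
    have c1: "cat s (int i - 1) = s ! (N - 1)" using cat_pred[OF L, of 0] True N0 by (simp add: N_def)
    have dN: "d < N"
    proof (rule ccontr)
      assume "\<not> d < N"
      then have "s ! ((i + (N - 1)) mod N) = SX" using run[of "N - 1"] N0 by simp
      then show False using h1 c1 True N0 by simp
    qed
    have c2: "cat s (int i + int d) = s ! d" using last True dN by simp
    show ?thesis unfolding c1 c2
    proof (rule wrap[unfolded N_def[symmetric]])
      show "N - 1 < N" "d < N" using N0 dN by auto
      show "s ! (N - 1) \<noteq> SX" "s ! d \<noteq> SX" using h1 h3 c1 c2 by auto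
      show "s ! r = SX" if "N - 1 < r" "r < N" for r using that by simp
      show "s ! r = SX" if "r < d" for r using run[OF that] True that dN by simp
    qed
  next
    case False
    have c1: "cat s (int i - 1) = s ! (i - 1)" using cat_pred[OF L] iN False by simp
    show ?thesis
    proof (cases "i + d < N")
      case True
      have c2: "cat s (int i + int d) = s ! (i + d)" using last True by simp
      show ?thesis unfolding c1 c2
      proof (rule inner[unfolded N_def[symmetric]])
        show "Suc (i - 1) < i + d" "i + d < N" using False d0 True by linarith+
        show "s ! (i - 1) \<noteq> SX" "s ! (i + d) \<noteq> SX" using h1 h3 c1 c2 by auto
        show "s ! r = SX" if "i - 1 < r" "r < i + d" for r
        proof -
          have "(i + (r - i)) mod N = r" using that False True by simp
          then show ?thesis using run[of "r - i"] that False by simp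
        qed
      qed
    next
      case wraps: False
      have dN: "d < N"
      proof (rule ccontr)
        assume "\<not> d < N"
        then have "(i + (N - 1)) mod N = i - 1"
          using False iN N0 by (simp add: N_def mod_if)
        then have "s ! (i - 1) = SX" using run[of "N - 1"] \<open>\<not> d < N\<close> N0 by simp
        then show False using h1 c1 by simp
      qed
      have "(i + d) mod N = i + d - N" using wraps dN iN by (simp add: N_def mod_if)
      then have c2: "cat s (int i + int d) = s ! (i + d - N)" using last by simp
      show ?thesis unfolding c1 c2
      proof (rule wrap[unfolded N_def[symmetric]])
        show "i - 1 < N" "i + d - N < N" using iN dN by (simp_all add: N_def)
        show "s ! (i - 1) \<noteq> SX" "s ! (i + d - N) \<noteq> SX" using h1 h3 c1 c2 by auto
        show "s ! r = SX" if "i - 1 < r" "r < N" for r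
        proof -
          have "(i + (r - i)) mod N = r" using that False by simp
          then show ?thesis using run[of "r - i"] that False wraps by simp
        qed
        show "s ! r = SX" if "r < i + d - N" for r
        proof -
          have "r < N" using that iN dN by (simp add: N_def)
          then have "(i + (N - i + r)) mod N = r" using iN by (simp add: N_def mod_if)
          then show ?thesis using run[of "N - i + r"] that iN by (simp add: N_def)
        qed
      qed
    qed
  qed
qed

text \<open>With an \<open>X\<close> at one end no block wraps around the end of the string, so the cyclic blocks
  of the string are exactly its \<open>K\<close> linear blocks.\<close>

locale open_block_string =
  fixes N K :: nat and a :: sym and A B :: "nat \<Rightarrow> nat"
  assumes data: "block_data N K A B" and bit: "a \<noteq> SX" and N_pos: "0 < N"
    and X_end: "(\<forall>i. \<not> in_block K A B (N - 1) i) \<or> (\<forall>i. \<not> in_block K A B 0 i)"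
begin

abbreviation s where "s \<equiv> block_string N K a A B"

lemma nth_in_block: "in_block K A B p l \<Longrightarrow> s ! p = alt_bit a l"
  using block_sym_in_block[OF data] in_block_less[OF data] by simp

lemma nth_eq_X_iff: "p < N \<Longrightarrow> s ! p = SX \<longleftrightarrow> (\<forall>l. \<not> in_block K A B p l)"
  using block_sym_eq_X_iff[OF data bit] by simp

lemma nth_bit_in_block:
  assumes "p < N" "s ! p \<noteq> SX"
  obtains l where "in_block K A B p l"
  using nth_eq_X_iff assms by blast

lemma next_bit_block:
  assumes "p < q" "in_block K A B p j" "in_block K A B q j'"
    and X: "\<And>r. p < r \<Longrightarrow> r < q \<Longrightarrow> s ! r = SX"
  shows "j' = j \<or> j' = Suc j"
proof -
  have jK: "j < K" "j' < K" using assms by (auto simp: in_block_def)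
  have "\<not> j' < j"
  proof
    assume "j' < j"
    then have "B j' < A j" using block_data_B_less_A[OF data] jK by simp
    then show False using assms by (auto simp: in_block_def)
  qed
  moreover have "\<not> Suc j < j'"
  proof
    assume h: "Suc j < j'"
    have start: "in_block K A B (A (Suc j)) (Suc j)" using in_block_A[OF data] h jK by simp
    have "B j < A (Suc j)" "A (Suc j) < A j'"
      using block_data_B_less_A[OF data, of j "Suc j"] block_data_A_less[OF data h] h jK by simp_all
    then have "p < A (Suc j)" "A (Suc j) < q" using assms(2,3) by (auto simp: in_block_def)
    then have "s ! A (Suc j) = SX" by (rule X)
    then show False using nth_in_block[OF start] alt_bit_not_X[OF bit] by simp
  qed
  ultimately show ?thesis by linarith
qed

lemma inner_bits_differ:
  assumes "Suc p < q" "q < N" "s ! p \<noteq> SX" "s ! q \<noteq> SX"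
    and X: "\<And>r. p < r \<Longrightarrow> r < q \<Longrightarrow> s ! r = SX"
  shows "s ! p \<noteq> s ! q"
proof -
  obtain j where j: "in_block K A B p j" using nth_bit_in_block assms by (meson Suc_lessD less_trans)
  obtain j' where j': "in_block K A B q j'" using nth_bit_in_block assms by meson
  have "j' \<noteq> j"
  proof
    assume "j' = j"
    then have "in_block K A B (Suc p) j" using j j' assms(1) by (auto simp: in_block_def)
    then show False using X[of "Suc p"] nth_in_block alt_bit_not_X[OF bit] assms(1) by simp
  qed
  then have "j' = Suc j" using next_bit_block[OF _ j j' X] assms(1) by simp
  then show ?thesis using nth_in_block[OF j] nth_in_block[OF j'] alt_bit_eq_iff[OF bit] by simp
qed

lemma last_block:
  assumes "in_block K A B p j" and X: "\<And>r. p < r \<Longrightarrow> r < N \<Longrightarrow> s ! r = SX"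
  shows "j = K - 1"
proof (rule ccontr)
  assume "j \<noteq> K - 1"
  then have h: "Suc j < K" using assms by (auto simp: in_block_def)
  have start: "in_block K A B (A (Suc j)) (Suc j)" using in_block_A[OF data h] .
  have "p < A (Suc j)"
    using block_data_B_less_A[OF data, of j "Suc j"] h assms(1) by (auto simp: in_block_def)
  then have "s ! A (Suc j) = SX" using X in_block_less[OF data start] by blast
  then show False using nth_in_block[OF start] alt_bit_not_X[OF bit] by simp
qed

lemma first_block:
  assumes "in_block K A B q j" and X: "\<And>r. r < q \<Longrightarrow> s ! r = SX"
  shows "j = 0"
proof (rule ccontr)
  assume "j \<noteq> 0"
  then have h: "0 < j" "j < K" using assms by (auto simp: in_block_def)
  have start: "in_block K A B (A 0) 0" using in_block_A[OF data] h by simp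
  have "A 0 < q" using block_data_A_less[OF data h] assms(1) by (auto simp: in_block_def)
  then have "s ! A 0 = SX" by (rule X)
  then show False using nth_in_block[OF start] alt_bit_not_X[OF bit] by simp
qed

lemma wrapping_bits_differ:
  assumes "even K" "p < N" "q < N" "s ! p \<noteq> SX" "s ! q \<noteq> SX"
    and "\<And>r. p < r \<Longrightarrow> r < N \<Longrightarrow> s ! r = SX" "\<And>r. r < q \<Longrightarrow> s ! r = SX"
  shows "s ! p \<noteq> s ! q"
proof -
  obtain j where j: "in_block K A B p j" using nth_bit_in_block assms by meson
  obtain j' where j': "in_block K A B q j'" using nth_bit_in_block assms by meson
  have "j = K - 1" "j' = 0" "0 < K"
    using last_block[OF j assms(6)] first_block[OF j' assms(7)] j by (auto simp: in_block_def)
  then show ?thesis using nth_in_block[OF j] nth_in_block[OF j'] alt_bit_eq_iff[OF bit] assms(1) by simp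
qed

lemma xblocks_ok_block_string:
  assumes "even K"
  shows "xblocks_ok s"
proof (rule xblocks_okI)
  fix p q
  assume "Suc p < q" "q < length s" "s ! p \<noteq> SX" "s ! q \<noteq> SX"
    "\<And>r. p < r \<Longrightarrow> r < q \<Longrightarrow> s ! r = SX"
  then show "s ! p \<noteq> s ! q" by (intro inner_bits_differ) simp_all
next
  fix p q
  assume "p < length s" "q < length s" "s ! p \<noteq> SX" "s ! q \<noteq> SX"
    "\<And>r. p < r \<Longrightarrow> r < length s \<Longrightarrow> s ! r = SX" "\<And>r. r < q \<Longrightarrow> s ! r = SX"
  then show "s ! p \<noteq> s ! q" by (intro wrapping_bits_differ[OF assms]) simp_all
qed (use N_pos in simp)

lemma block_starts:
  assumes c: "c \<noteq> SX"
  shows "{i. i < N \<and> cat s (int i) = c \<and> cat s (int i - 1) \<noteq> c} = A ` {l. l < K \<and> alt_bit a l = c}"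
    (is "?starts = _")
proof (intro equalityI subsetI)
  have L: "0 < length s" using N_pos by simp
  fix i assume "i \<in> ?starts"
  then have i: "i < N" "s ! i = c" "cat s (int i - 1) \<noteq> c" using cat_nth[OF L, of i] by auto
  then obtain l where l: "in_block K A B i l" using nth_bit_in_block[OF i(1)] c by auto
  then have lc: "alt_bit a l = c" using nth_in_block[OF l] i(2) by simp
  have "i = A l"
  proof (rule ccontr)
    assume "i \<noteq> A l"
    then have "A l < i" using l by (auto simp: in_block_def)
    then have "in_block K A B (i - 1) l" using l by (auto simp: in_block_def)
    moreover have "cat s (int i - 1) = s ! (i - 1)" using cat_pred[OF L, of i] i \<open>A l < i\<close> by simp
    ultimately show False using nth_in_block lc i(3) by simp
  qed
  then show "i \<in> A ` {l. l < K \<and> alt_bit a l = c}" using l lc by (auto simp: in_block_def)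
next
  have L: "0 < length s" using N_pos by simp
  fix i assume "i \<in> A ` {l. l < K \<and> alt_bit a l = c}"
  then obtain l where l: "l < K" "alt_bit a l = c" "i = A l" by auto
  have il: "in_block K A B i l" using in_block_A[OF data l(1)] l(3) by simp
  have iN: "i < N" using in_block_less[OF data il] .
  have "cat s (int i - 1) \<noteq> c"
  proof (cases "i = 0")
    case True
    then have "s ! (N - 1) = SX" using X_end il nth_eq_X_iff[of "N - 1"] N_pos by auto
    then show ?thesis using cat_pred[OF L, of i] True N_pos c by simp
  next
    case False
    have cp: "cat s (int i - 1) = s ! (i - 1)" using cat_pred[OF L, of i] False iN by simp
    show ?thesis
    proof (cases "s ! (i - 1) = SX")
      case False
      moreover have "i - 1 < N" using iN by simp
      ultimately obtain l' where l': "in_block K A B (i - 1) l'" using nth_bit_in_block by blast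
      have "i - 1 < i" "\<And>r. i - 1 < r \<Longrightarrow> r < i \<Longrightarrow> s ! r = SX" using \<open>i \<noteq> 0\<close> by simp_all
      then have "l = l' \<or> l = Suc l'" using next_bit_block[OF _ l' il] by blast
      moreover have "l' \<noteq> l" using l' l(3) \<open>i \<noteq> 0\<close> by (auto simp: in_block_def)
      ultimately have "l = Suc l'" by blast
      then show ?thesis using cp nth_in_block[OF l'] l(2) alt_bit_eq_iff[OF bit] by auto
    qed (use cp c in simp)
  qed
  then show "i \<in> ?starts" using iN nth_in_block[OF il] l(2) cat_nth[OF L, of i] by simp
qed

lemma nblocks_block_string:
  assumes c: "c \<noteq> SX"
  shows "nblocks s c = card {l. l < K \<and> alt_bit a l = c}"
proof -
  have ends: "s ! (N - 1) = SX \<or> s ! 0 = SX"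
    using X_end nth_eq_X_iff[of "N - 1"] nth_eq_X_iff[of 0] N_pos by simp
  have not_const: "\<not> (s \<noteq> [] \<and> (\<forall>i<length s. s ! i = c))"
  proof
    assume "s \<noteq> [] \<and> (\<forall>i<length s. s ! i = c)"
    then have "s ! (N - 1) = c" "s ! 0 = c" using N_pos by auto
    then show False using ends c by auto
  qed
  have inj: "inj_on A {l. l < K \<and> alt_bit a l = c}"
  proof (rule inj_onI, rule ccontr)
    fix x y
    assume "x \<in> {l. l < K \<and> alt_bit a l = c}" "y \<in> {l. l < K \<and> alt_bit a l = c}"
      and eq: "A x = A y" and "x \<noteq> y"
    then have "x < K" "y < K" by simp_all
    consider "x < y" | "y < x" using \<open>x \<noteq> y\<close> by linarith
    then show False
    proof cases
      case 1
      then have "A x < A y" using block_data_A_less[OF data _ \<open>y < K\<close>] by blast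
      then show False using eq by simp
    next
      case 2
      then have "A y < A x" using block_data_A_less[OF data _ \<open>x < K\<close>] by blast
      then show False using eq by simp
    qed
  qed
  have "nblocks s c = card {i. i < length s \<and> cat s (int i) = c \<and> cat s (int i - 1) \<noteq> c}"
    unfolding nblocks_def by (rule if_not_P) (rule not_const)
  also have "\<dots> = card (A ` {l. l < K \<and> alt_bit a l = c})" using block_starts[OF c] by simp
  also have "\<dots> = card {l. l < K \<and> alt_bit a l = c}" by (rule card_image[OF inj])
  finally show ?thesis .
qed

lemma block_string_in_Str:
  assumes K: "K = 2 * M"
  shows "s \<in> Str N M"
proof -
  have "nblocks s c = M" if "c \<noteq> SX" for c
    using nblocks_block_string[OF that] card_alt_bit[OF bit that, of M] K by simp
  moreover have "xblocks_ok s" using xblocks_ok_block_string K by simp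
  ultimately show ?thesis unfolding Str_def by simp
qed

lemma number_of_blocks:
  assumes "s \<in> Str N M"
  shows "K = 2 * M"
proof -
  define zeros ones where "zeros = {l. l < K \<and> alt_bit a l = S0}" and "ones = {l. l < K \<and> alt_bit a l
      = S1}"
  have "alt_bit a l = S0 \<or> alt_bit a l = S1" for l
    using alt_bit_not_X[OF bit, of l] by (cases "alt_bit a l") auto
  then have "{..<K} = zeros \<union> ones" unfolding zeros_def ones_def by auto
  moreover have "card (zeros \<union> ones) = card zeros + card ones"
    by (rule card_Un_disjoint) (auto simp: zeros_def ones_def)
  ultimately have "K = card zeros + card ones" by (metis card_lessThan)
  also have "\<dots> = 2 * M"
    using assms nblocks_block_string unfolding zeros_def ones_def by (simp add: Str_def)
  finally show ?thesis .
qed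

end

section \<open>Cellular strings are block strings\<close>

lemma block_string_no_blocks: "block_string N 0 a A B = replicate N SX"
proof -
  have "block_sym 0 a A B = (\<lambda>_. SX)" by (auto simp: block_sym_def in_block_def)
  then show ?thesis by (simp add: block_string_def map_replicate_const)
qed

lemma block_string_snoc_X:
  assumes "block_data n K A B"
  shows "block_string (Suc n) K a A B = block_string n K a A B @ [SX]"
proof -
  have "\<not> in_block K A B n i" for i using in_block_less[OF assms] by blast
  then show ?thesis by (simp add: block_string_Suc block_sym_outside)
qed

lemma block_string_extend_last:
  assumes d: "block_data n K A B" and K: "0 < K" and last: "B (K - 1) = n - 1"
  shows "block_data (Suc n) K A (B(K - 1 := n))"
    and "block_string (Suc n) K a A (B(K - 1 := n)) = block_string n K a A B @ [alt_bit a (K - 1)]"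
proof -
  have "B (K - 1) < n" using block_dataD(2)[OF d] K by simp
  then have n: "0 < n" by simp
  show d': "block_data (Suc n) K A (B(K - 1 := n))"
    unfolding block_data_def
  proof (intro conjI allI impI)
    fix i assume "i < K"
    then show "A i \<le> (B(K - 1 := n)) i" "(B(K - 1 := n)) i < Suc n"
      using block_dataD(1,2)[OF d, of i] by auto
  next
    fix i assume "Suc i < K"
    then show "(B(K - 1 := n)) i < A (Suc i)" using block_dataD(3)[OF d, of i] by auto
  qed
  have "block_string n K a A (B(K - 1 := n)) = block_string n K a A B"
    by (rule block_string_cong) (use last n in \<open>auto simp: in_block_def\<close>)
  moreover have "in_block K A (B(K - 1 := n)) n (K - 1)"
    using block_dataD(1,2)[OF d, of "K - 1"] K by (simp add: in_block_def)
  ultimately show "block_string (Suc n) K a A (B(K - 1 := n))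
      = block_string n K a A B @ [alt_bit a (K - 1)]"
    using block_sym_in_block[OF d'] by (simp add: block_string_Suc)
qed

lemma block_string_new_block:
  assumes d: "block_data n K A B"
  shows "block_data (Suc n) (Suc K) (A(K := n)) (B(K := n))"
    and "block_string (Suc n) (Suc K) a (A(K := n)) (B(K := n))
        = block_string n K a A B @ [alt_bit a K]"
proof -
  show d': "block_data (Suc n) (Suc K) (A(K := n)) (B(K := n))"
    unfolding block_data_def
  proof (intro conjI allI impI)
    fix i assume "i < Suc K"
    then show "(A(K := n)) i \<le> (B(K := n)) i" "(B(K := n)) i < Suc n"
      using block_dataD(1,2)[OF d, of i] by (auto simp: less_Suc_eq)
  next
    fix i assume "Suc i < Suc K"
    then show "(B(K := n)) i < (A(K := n)) (Suc i)"
      using block_dataD(2,3)[OF d, of i] by (auto simp: less_Suc_eq)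
  qed
  have "block_string n (Suc K) a (A(K := n)) (B(K := n)) = block_string n K a A B"
    by (rule block_string_cong) (auto simp: in_block_def less_Suc_eq)
  moreover have "in_block (Suc K) (A(K := n)) (B(K := n)) n K" by (simp add: in_block_def)
  ultimately show "block_string (Suc n) (Suc K) a (A(K := n)) (B(K := n))
      = block_string n K a A B @ [alt_bit a K]"
    using block_sym_in_block[OF d'] by (simp add: block_string_Suc)
qed

text \<open>The linear (non-cyclic) part of \<open>xblocks_ok\<close>.\<close>

definition bits_alternate :: "sym list \<Rightarrow> bool" where
  "bits_alternate w \<longleftrightarrow> (\<forall>i j. Suc i < j \<longrightarrow> j < length w \<longrightarrow> w ! i \<noteq> SX \<longrightarrow>
     (\<forall>k. i < k \<longrightarrow> k < j \<longrightarrow> w ! k = SX) \<longrightarrow> w ! i \<noteq> w ! j)"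

lemma bits_alternate_butlast: "bits_alternate (w @ [x]) \<Longrightarrow> bits_alternate w"
  unfolding bits_alternate_def
proof (intro allI impI)
  fix i j
  assume alt: "\<forall>i j. Suc i < j \<longrightarrow> j < length (w @ [x]) \<longrightarrow> (w @ [x]) ! i \<noteq> SX \<longrightarrow>
      (\<forall>k. i < k \<longrightarrow> k < j \<longrightarrow> (w @ [x]) ! k = SX) \<longrightarrow> (w @ [x]) ! i \<noteq> (w @ [x]) ! j"
    and h: "Suc i < j" "j < length w" "w ! i \<noteq> SX" "\<forall>k. i < k \<longrightarrow> k < j \<longrightarrow> w ! k = SX"
  then have "(w @ [x]) ! i \<noteq> (w @ [x]) ! j" using alt[rule_format, of i j] by (simp add: nth_append)
  then show "w ! i \<noteq> w ! j" using h by (simp add: nth_append)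
qed

lemma xblocks_ok_bits_alternate:
  assumes "xblocks_ok s"
  shows "bits_alternate s"
  unfolding bits_alternate_def
proof (intro allI impI)
  fix i j
  assume h: "Suc i < j" "j < length s" "s ! i \<noteq> SX" "\<forall>k. i < k \<longrightarrow> k < j \<longrightarrow> s ! k = SX"
  show "s ! i \<noteq> s ! j"
  proof (cases "s ! j = SX")
    case False
    have L: "0 < length s" using h(2) by linarith
    define d where "d = j - Suc i"
    have c1: "cat s (int (Suc i) - 1) = s ! i" using cat_pred[OF L, of "Suc i"] h by simp
    have c2: "cat s (int (Suc i) + int t) = SX" if "t < d" for t
    proof -
      have "Suc i + t < length s" "i < Suc i + t" "Suc i + t < j" using that h by (auto simp: d_def)
      then show ?thesis using cat_add[OF L, of "Suc i" t] h(4) by simp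
    qed
    have c3: "cat s (int (Suc i) + int d) = s ! j"
      using cat_add[OF L, of "Suc i" d] h by (simp add: d_def)
    show ?thesis
      using assms[unfolded xblocks_ok_def, rule_format, of "Suc i" d] h c1 c2 c3 False
      by (auto simp: d_def)
  qed (use h in simp)
qed

lemma bits_alternate_next_block:
  assumes d: "block_data n K A B" and a: "a \<noteq> SX" and x: "x \<noteq> SX" and K: "0 < K"
    and alt: "bits_alternate (block_string n K a A B @ [x])"
    and new: "\<not> (B (K - 1) = n - 1 \<and> alt_bit a (K - 1) = x)"
  shows "alt_bit a K = x"
proof -
  define w where "w = block_string n K a A B"
  define l where "l = K - 1"
  have l: "l < K" "K = Suc l" using K by (auto simp: l_def)
  have "alt_bit a l \<noteq> x"
  proof
    assume lx: "alt_bit a l = x"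
    have "B l \<noteq> n - 1" using new lx by (simp add: l_def)
    then have Bl: "B l < n - 1" using block_dataD(2)[OF d l(1)] by linarith
    have wBl: "w ! (B l) = alt_bit a l"
      using block_sym_in_block[OF d in_block_B[OF d l(1)]] Bl by (simp add: w_def)
    moreover have "w ! k = SX" if "B l < k" "k < n" for k
    proof -
      have "\<not> in_block K A B k i" for i
        using block_data_B_le[OF d, of i l] l that by (auto simp: in_block_def)
      then show ?thesis using that block_sym_outside by (simp add: w_def)
    qed
    ultimately have "(w @ [x]) ! (B l) \<noteq> (w @ [x]) ! n"
      using alt[folded w_def, unfolded bits_alternate_def, rule_format, of "B l" n] Bl
        alt_bit_not_X[OF a] by (auto simp: nth_append w_def)
    moreover have "B l < n" using Bl by simp
    ultimately show False using lx wBl by (simp add: nth_append w_def)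
  qed
  then show ?thesis using l alt_bit_Suc eq_other_bit[OF x alt_bit_not_X[OF a]] by metis
qed

lemma bits_alternate_block_string:
  "bits_alternate w \<Longrightarrow> \<exists>K a A B. block_data (length w) K A B \<and> a \<noteq> SX \<and> block_string (length w) K a A B
      = w"
proof (induction w rule: rev_induct)
  case Nil
  show ?case by (rule exI[of _ 0], rule exI[of _ S0]) (auto simp: block_data_def block_string_def)
next
  case (snoc x w)
  define n where "n = length w"
  obtain K a A B where IH: "block_data n K A B" "a \<noteq> SX" "block_string n K a A B = w"
    using snoc.IH[OF bits_alternate_butlast[OF snoc.prems]] n_def by blast
  let ?ok = "\<lambda>K a A B. block_data (Suc n) K A B \<and> a \<noteq> SX \<and> block_string (Suc n) K a A B = w @ [x]"
  have len: "length (w @ [x]) = Suc n" by (simp add: n_def)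
  consider "x = SX" | "x \<noteq> SX" "K = 0" | "x \<noteq> SX" "0 < K" "B (K - 1) = n - 1" "alt_bit a (K - 1) = x"
    | "x \<noteq> SX" "0 < K" "\<not> (B (K - 1) = n - 1 \<and> alt_bit a (K - 1) = x)"
    by blast
  then have "\<exists>K a A B. ?ok K a A B"
  proof cases
    case 1
    then have "?ok K a A B"
      using IH block_string_snoc_X[OF IH(1)] block_data_mono[OF IH(1), of "Suc n"] by simp
    then show ?thesis by blast
  next
    case 2
    then have "block_string n K x A B = w" using IH(3) by (simp add: block_string_no_blocks)
    then have "?ok (Suc K) x (A(K := n)) (B(K := n))"
      using 2 block_string_new_block(1)[OF IH(1)] block_string_new_block(2)[OF IH(1), of x]
      by (simp add: alt_bit_def)
    then show ?thesis by blast
  next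
    case 3
    then have "?ok K a A (B(K - 1 := n))"
      using IH block_string_extend_last(1)[OF IH(1)] block_string_extend_last(2)[OF IH(1), where a
        = a] 3 by simp
    then show ?thesis by blast
  next
    case 4
    then have "alt_bit a K = x" using bits_alternate_next_block IH snoc.prems by blast
    then have "?ok (Suc K) a (A(K := n)) (B(K := n))"
      using IH block_string_new_block(1)[OF IH(1)] block_string_new_block(2)[OF IH(1), of a] by simp
    then show ?thesis by blast
  qed
  then show ?case using len by simp
qed

lemma Str_block_string:
  assumes "s \<in> Str N M"
  obtains K a A B where "block_data N K A B" "a \<noteq> SX" "block_string N K a A B = s"
proof -
  have "length s = N" "xblocks_ok s" using assms by (simp_all add: Str_def)
  then show thesis using that bits_alternate_block_string[OF xblocks_ok_bits_alternate] by blast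
qed

section \<open>Contraction of \<open>Str\<^sub>a\<^sub>X\<close>\<close>

definition left_anchored :: "nat \<Rightarrow> nat \<Rightarrow> ((nat \<Rightarrow> nat) \<times> (nat \<Rightarrow> nat)) set" where
  "left_anchored N K = {(A, B). block_data N K A B \<and> A 0 = 0 \<and> B (K - 1) < N - 1}"

lemma Str_ab_bit_X_eq:
  assumes a: "a \<noteq> SX" and M: "0 < M" "2 * M < N"
  shows "Str_ab N M a SX = (\<lambda>(A, B). block_string N (2 * M) a A B) ` left_anchored N (2 * M)"
proof (intro equalityI subsetI)
  fix s assume "s \<in> (\<lambda>(A, B). block_string N (2 * M) a A B) ` left_anchored N (2 * M)"
  then obtain A B where d: "block_data N (2 * M) A B" and A0: "A 0 = 0"
    and last: "B (2 * M - 1) < N - 1" and s: "s = block_string N (2 * M) a A B"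
    by (auto simp: left_anchored_def)
  have no_last: "\<not> in_block (2 * M) A B (N - 1) i" for i
  proof
    assume "in_block (2 * M) A B (N - 1) i"
    then have "i \<le> 2 * M - 1" "N - 1 \<le> B i" by (auto simp: in_block_def)
    then show False using block_data_B_le[OF d, of i "2 * M - 1"] last M by linarith
  qed
  interpret open_block_string N "2 * M" a A B
    using d a M no_last by unfold_locales auto
  have "s ! 0 = a"
    using nth_in_block[of 0 0] A0 M d s by (simp add: in_block_def block_dataD alt_bit_def)
  moreover have "s ! (N - 1) = SX" using nth_eq_X_iff[of "N - 1"] no_last s M by simp
  ultimately show "s \<in> Str_ab N M a SX" using block_string_in_Str s by (simp add: Str_ab_def)
next
  fix s assume "s \<in> Str_ab N M a SX"
  then have s: "s \<in> Str N M" "s ! 0 = a" "s ! (N - 1) = SX" by (auto simp: Str_ab_def)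
  obtain K a' A B where d: "block_data N K A B" "a' \<noteq> SX" "block_string N K a' A B = s"
    using Str_block_string[OF s(1)] .
  have N: "0 < N" using M by simp
  have no_last: "\<forall>i. \<not> in_block K A B (N - 1) i"
    using block_sym_eq_X_iff[OF d(1,2), of "N - 1"] s(3) d(3) N by auto
  interpret open_block_string N K a' A B using d no_last N by unfold_locales auto
  have K: "K = 2 * M" using number_of_blocks s(1) d(3) by simp
  obtain l where l: "in_block K A B 0 l" using nth_bit_in_block[of 0] s(2) a d(3) N by auto
  have "l = 0" using first_block[OF l] by simp
  then have A0: "A 0 = 0" and aa: "a' = a"
    using l nth_in_block[OF l] s(2) d(3) by (auto simp: in_block_def alt_bit_def)
  have "B (K - 1) \<noteq> N - 1"
    using no_last in_block_B[OF d(1), of "K - 1"] K M by auto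
  then have "B (K - 1) < N - 1" using block_dataD(2)[OF d(1), of "K - 1"] K M by linarith
  then have "(A, B) \<in> left_anchored N (2 * M)" using d(1) A0 K by (simp add: left_anchored_def)
  then show "s \<in> (\<lambda>(A, B). block_string N (2 * M) a A B) ` left_anchored N (2 * M)"
    using d(3) aa K by force
qed

lemma left_anchored_lower:
  assumes "(A, B) \<in> left_anchored N K" "l < K"
  shows "l \<le> A l \<and> l \<le> B l"
  using assms(2)
proof (induction l)
  case 0
  then show ?case using assms(1) by (simp add: left_anchored_def)
next
  case (Suc l)
  have d: "block_data N K A B" using assms(1) by (simp add: left_anchored_def)
  then have "B l < A (Suc l)" "A (Suc l) \<le> B (Suc l)" using block_dataD[OF d] Suc.prems by auto
  then show ?case using Suc by simp
qed

definition blocks_le :: "nat \<Rightarrow> (nat \<Rightarrow> nat) \<times> (nat \<Rightarrow> nat) \<Rightarrow> (nat \<Rightarrow> nat) \<times> (nat \<Rightarrow> nat) \<Rightarrow> bool" where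
  "blocks_le K u v \<longleftrightarrow> (\<forall>i<K. fst u i \<le> fst v i \<and> snd v i \<le> snd u i)"

text \<open>Stage \<open>m\<close> of the contraction: step \<open>2 l\<close> stretches block \<open>l\<close> to the left until
  it starts at \<open>l\<close>, step \<open>2 l + 1\<close> shrinks it to the single position \<open>l\<close>. The two kinds
  of steps move down and up in the order, respectively.\<close>

definition collapse :: "nat \<Rightarrow> (nat \<Rightarrow> nat) \<times> (nat \<Rightarrow> nat) \<Rightarrow> (nat \<Rightarrow> nat) \<times> (nat \<Rightarrow> nat)" where
  "collapse m u = ((\<lambda>l. if 2 * l < m then l else fst u l), (\<lambda>l. if 2 * l + 1 < m then l else snd u l))"

lemma collapse_0: "collapse 0 u = u"
  by (simp add: collapse_def)

lemma blocks_le_collapse: "blocks_le K u v \<Longrightarrow> blocks_le K (collapse m u) (collapse m v)"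
  by (auto simp: blocks_le_def collapse_def)

lemma collapse_in_left_anchored:
  assumes u: "u \<in> left_anchored N K" and KN: "K < N"
  shows "collapse m u \<in> left_anchored N K"
proof -
  obtain A B where AB: "u = (A, B)" by fastforce
  have d: "block_data N K A B" and A0: "A 0 = 0" and last: "B (K - 1) < N - 1"
    using u AB by (auto simp: left_anchored_def)
  have lower: "l \<le> A l" "l \<le> B l" if "l < K" for l using left_anchored_lower u AB that by auto
  define A' where "A' l = (if 2 * l < m then l else A l)" for l
  define B' where "B' l = (if 2 * l + 1 < m then l else B l)" for l
  have "block_data N K A' B'"
    unfolding block_data_def
  proof (intro conjI allI impI)
    fix i assume "i < K"
    then show "A' i \<le> B' i" "B' i < N"
      using block_dataD(1,2)[OF d, of i] lower[of i] KN by (auto simp: A'_def B'_def)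
  next
    fix i assume i: "Suc i < K"
    then show "B' i < A' (Suc i)"
      using block_dataD(3)[OF d i] lower[of "Suc i"] by (auto simp: A'_def B'_def)
  qed
  moreover have "A' 0 = 0" "B' (K - 1) < N - 1" using A0 last KN by (auto simp: A'_def B'_def)
  moreover have "collapse m u = (A', B')"
    unfolding AB collapse_def fst_conv snd_conv A'_def[abs_def] B'_def[abs_def] by (rule refl)
  ultimately show ?thesis by (simp add: left_anchored_def)
qed

lemma collapse_step:
  assumes "u \<in> left_anchored N K"
  shows "blocks_le K (collapse (Suc (2 * l)) u) (collapse (2 * l) u)"
    and "blocks_le K (collapse (Suc (2 * l)) u) (collapse (Suc (Suc (2 * l))) u)"
proof -
  obtain A B where AB: "u = (A, B)" by fastforce
  have lower: "l' \<le> A l'" "l' \<le> B l'" if "l' < K" for l' using left_anchored_lower assms AB that by auto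
  have "fst (collapse (Suc (2 * l)) u) i \<le> fst (collapse (2 * l) u) i
      \<and> snd (collapse (2 * l) u) i \<le> snd (collapse (Suc (2 * l)) u) i"
    "fst (collapse (Suc (2 * l)) u) i \<le> fst (collapse (Suc (Suc (2 * l))) u) i
      \<and> snd (collapse (Suc (Suc (2 * l))) u) i \<le> snd (collapse (Suc (2 * l)) u) i" if "i < K" for i
    using lower[OF that] by (cases "i < l"; cases "i = l"; simp add: collapse_def AB)+
  then show "blocks_le K (collapse (Suc (2 * l)) u) (collapse (2 * l) u)"
    "blocks_le K (collapse (Suc (2 * l)) u) (collapse (Suc (Suc (2 * l))) u)"
    unfolding blocks_le_def by blast+
qed

lemma finite_poset_on_strle:
  assumes "P \<subseteq> {s. length s = N}"
  shows "finite_poset_on P strle"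
proof
  have "(UNIV :: sym set) = {S0, S1, SX}" using sym.exhaust by blast
  then have "finite (UNIV :: sym set)" by (metis finite.emptyI finite.insertI)
  then have "finite {s :: sym list. set s \<subseteq> UNIV \<and> length s = N}"
    by (rule finite_lists_length_eq)
  then show "finite P" using assms by (auto intro: finite_subset)
  show "strle x x" for x by (simp add: strle_def)
  show "strle x z" if "strle x y" "strle y z" for x y z using that unfolding strle_def by metis
  show "x = y" if "strle x y" "strle y x" for x y
    using that unfolding strle_def by (metis list_eq_iff_nth_eq sym.distinct)
qed

lemma contractible_Str_ab_bit_X:
  assumes a: "a \<noteq> SX" and M: "0 < M" "2 * M < N"
  shows "contractible_space (geom_real (Str_ab N M a SX) strle)"
proof -
  let ?K = "2 * M"
  let ?par = "\<lambda>(A, B). block_string N ?K a A B"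
  interpret finite_poset_on "Str_ab N M a SX" strle
    by (rule finite_poset_on_strle[where N = N]) (auto simp: Str_ab_def Str_def)
  show ?thesis
  proof (rule contractible_space_geom_real_param_zigzag[where par = ?par and D = "left_anchored N ?K"
        and leD = "blocks_le ?K" and G = collapse and m = "2 * ?K" and c = "block_string N ?K a id id"])
    show "Str_ab N M a SX = ?par ` left_anchored N ?K" by (rule Str_ab_bit_X_eq[OF a M])
    show "strle (?par u) (?par v) \<longleftrightarrow> blocks_le ?K u v"
      if "u \<in> left_anchored N ?K" "v \<in> left_anchored N ?K" for u v
      using that strle_block_string_iff[OF _ _ a] by (auto simp: left_anchored_def blocks_le_def)
    show "collapse j u \<in> left_anchored N ?K" if "u \<in> left_anchored N ?K" for j u
      using collapse_in_left_anchored[OF that] M by simp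
    show "blocks_le ?K (collapse j u) (collapse j v)" if "blocks_le ?K u v" for j u v
      using blocks_le_collapse[OF that] .
    show "?par (collapse 0 u) = ?par u" for u by (simp add: collapse_0)
    show "?par (collapse (2 * ?K) u) = block_string N ?K a id id" for u
      unfolding collapse_def by (simp, rule block_string_cong) (auto simp: in_block_def)
    show "(\<forall>u\<in>left_anchored N ?K. blocks_le ?K (collapse j u) (collapse (Suc j) u)) \<or>
          (\<forall>u\<in>left_anchored N ?K. blocks_le ?K (collapse (Suc j) u) (collapse j u))" for j
    proof (cases "even j")
      case True
      then obtain l where j: "j = 2 * l" by blast
      have "\<forall>u\<in>left_anchored N ?K. blocks_le ?K (collapse (Suc j) u) (collapse j u)"
        unfolding j using collapse_step(1)[of _ N ?K l] by blast
      then show ?thesis by (rule disjI2)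
    next
      case False
      then obtain l where "j = 2 * l + 1" by (rule oddE)
      then have j: "j = Suc (2 * l)" by simp
      have "\<forall>u\<in>left_anchored N ?K. blocks_le ?K (collapse j u) (collapse (Suc j) u)"
        unfolding j using collapse_step(2)[of _ N ?K l] by blast
      then show ?thesis by (rule disjI1)
    qed
  qed
qed

section \<open>Reversal\<close>

abbreviation mirror :: "nat \<Rightarrow> nat \<Rightarrow> (nat \<Rightarrow> nat) \<Rightarrow> nat \<Rightarrow> nat" where
  "mirror N K f \<equiv> \<lambda>l. N - 1 - f (K - 1 - l)"

context
  fixes N K :: nat and A B :: "nat \<Rightarrow> nat"
  assumes d: "block_data N K A B"
begin

lemma in_block_rev:
  assumes p: "p < N"
  shows "in_block K (mirror N K B) (mirror N K A) p l \<longleftrightarrow> l < K \<and> in_block K A B (N - 1 - p) (K - 1 - l)"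
proof (cases "l < K")
  case True
  then have "A (K - 1 - l) \<le> B (K - 1 - l)" "B (K - 1 - l) < N"
    using block_dataD(1,2)[OF d, of "K - 1 - l"] by simp_all
  then show ?thesis using p True by (auto simp: in_block_def)
qed (simp add: in_block_def)

lemma block_data_rev: "block_data N K (mirror N K B) (mirror N K A)"
  unfolding block_data_def
proof (intro conjI allI impI)
  fix i assume "i < K"
  then show "mirror N K B i \<le> mirror N K A i" "mirror N K A i < N"
    using block_dataD(1,2)[OF d, of "K - 1 - i"] by simp_all
next
  fix i assume i: "Suc i < K"
  define j where "j = K - Suc (Suc i)"
  have e: "K - Suc i = Suc j" "K - Suc (Suc i) = j" and j: "Suc j < K" using i by (auto simp: j_def)
  have "B j < A (Suc j)" "A (Suc j) < N"
    using block_dataD(3)[OF d j] block_dataD(1,2)[OF d, of "Suc j"] j by simp_all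
  then show "mirror N K A i < mirror N K B (Suc i)" by (simp add: e)
qed

lemma rev_block_string:
  assumes K: "0 < K"
  shows "rev (block_string N K a A B)
      = block_string N K (alt_bit a (K - 1)) (mirror N K B) (mirror N K A)"
proof (rule nth_equalityI)
  fix p assume "p < length (rev (block_string N K a A B))"
  then have p: "p < N" by simp
  have "block_sym K a A B (N - 1 - p) = block_sym K (alt_bit a (K - 1)) (mirror N K B) (mirror N K A) p"
  proof (cases "\<exists>i. in_block K A B (N - 1 - p) i")
    case True
    then obtain i where i: "in_block K A B (N - 1 - p) i" by blast
    then have "i < K" by (simp add: in_block_def)
    then have idx: "K - 1 + (K - 1 - i) = 2 * (K - 1 - i) + i" by arith
    have "in_block K (mirror N K B) (mirror N K A) p (K - 1 - i)"
      using in_block_rev[OF p] i \<open>i < K\<close> by simp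
    then have "block_sym K (alt_bit a (K - 1)) (mirror N K B) (mirror N K A) p
        = alt_bit (alt_bit a (K - 1)) (K - 1 - i)"
      by (rule block_sym_in_block[OF block_data_rev])
    also have "\<dots> = alt_bit a (K - 1 + (K - 1 - i))" by (rule alt_bit_alt_bit)
    also have "\<dots> = alt_bit a (2 * (K - 1 - i) + i)" by (simp only: idx)
    also have "\<dots> = alt_bit a i" by (rule alt_bit_parity) simp
    finally show ?thesis using block_sym_in_block[OF d i] by simp
  next
    case False
    then have "\<not> in_block K (mirror N K B) (mirror N K A) p l" for l using in_block_rev[OF p] by blast
    then show ?thesis using False block_sym_outside by metis
  qed
  then show "rev (block_string N K a A B) ! p
      = block_string N K (alt_bit a (K - 1)) (mirror N K B) (mirror N K A) ! p"
    using p by (simp add: rev_nth)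
qed simp

end

lemma Str_length_pos: "s \<in> Str N M \<Longrightarrow> 0 < M \<Longrightarrow> 0 < N"
  by (cases s) (auto simp: Str_def nblocks_def)

lemma rev_in_Str:
  assumes s: "s \<in> Str N M" and M: "0 < M" and X: "s ! 0 = SX \<or> s ! (N - 1) = SX"
  shows "rev s \<in> Str N M"
proof -
  obtain K a A B where d: "block_data N K A B" "a \<noteq> SX" and s_eq: "block_string N K a A B = s"
    using Str_block_string[OF s] .
  have N: "0 < N" using Str_length_pos[OF s M] .
  have X_end: "(\<forall>i. \<not> in_block K A B (N - 1) i) \<or> (\<forall>i. \<not> in_block K A B 0 i)"
    using X block_sym_eq_X_iff[OF d] N s_eq by auto
  interpret open_block_string N K a A B using d X_end N by unfold_locales
  have K: "0 < K" using number_of_blocks s s_eq M by simp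
  interpret rev: open_block_string N K "alt_bit a (K - 1)" "mirror N K B" "mirror N K A"
  proof
    show "block_data N K (mirror N K B) (mirror N K A)"
      using block_data_rev[OF d(1)] .
    show "alt_bit a (K - 1) \<noteq> SX" using alt_bit_not_X[OF d(2)] .
    show "0 < N" using N .
    show "(\<forall>i. \<not> in_block K (mirror N K B) (mirror N K A) (N - 1) i) \<or>
          (\<forall>i. \<not> in_block K (mirror N K B) (mirror N K A) 0 i)"
      using X_end in_block_rev[OF d(1), of "N - 1"] in_block_rev[OF d(1), of 0] N by auto
  qed
  have "rev s = block_string N K (alt_bit a (K - 1)) (mirror N K B) (mirror N K A)"
    using rev_block_string[OF d(1) K, of a] s_eq[symmetric] by simp
  then show ?thesis using rev.block_string_in_Str number_of_blocks s s_eq by simp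
qed

lemma Str_ab_X_bit_eq_rev:
  assumes M: "0 < M"
  shows "Str_ab N M SX b = rev ` Str_ab N M b SX"
proof -
  have ends: "rev s ! 0 = s ! (N - 1)" "rev s ! (N - 1) = s ! 0" if "s \<in> Str N M" for s
    using Str_length_pos[OF that M] that by (auto simp: Str_def rev_nth)
  have rev_Str: "rev s \<in> Str N M" if "s \<in> Str N M" "s ! 0 = SX \<or> s ! (N - 1) = SX" for s
    using rev_in_Str that M by blast
  show ?thesis
  proof (intro equalityI subsetI)
    fix s assume "s \<in> Str_ab N M SX b"
    then have "rev s \<in> Str_ab N M b SX" and "s = rev (rev s)"
      using ends rev_Str by (auto simp: Str_ab_def)
    then show "s \<in> rev ` Str_ab N M b SX" by blast
  next
    fix s assume "s \<in> rev ` Str_ab N M b SX"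
    then obtain t where "t \<in> Str_ab N M b SX" "s = rev t" by blast
    then show "s \<in> Str_ab N M SX b" using ends rev_Str by (auto simp: Str_ab_def)
  qed
qed

lemma strle_rev: "strle (rev x) (rev y) \<longleftrightarrow> strle x y"
proof -
  have "(\<forall>i<length y. rev x ! i = rev y ! i \<or> rev y ! i = SX) \<longleftrightarrow>
        (\<forall>i<length y. x ! i = y ! i \<or> y ! i = SX)" if "length x = length y"
  proof
    assume h: "\<forall>i<length y. rev x ! i = rev y ! i \<or> rev y ! i = SX"
    show "\<forall>i<length y. x ! i = y ! i \<or> y ! i = SX"
    proof (intro allI impI)
      fix i assume i: "i < length y"
      then show "x ! i = y ! i \<or> y ! i = SX"
        using h[rule_format, of "length y - Suc i"] that by (simp add: rev_nth Suc_diff_Suc)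
    qed
  next
    assume h: "\<forall>i<length y. x ! i = y ! i \<or> y ! i = SX"
    show "\<forall>i<length y. rev x ! i = rev y ! i \<or> rev y ! i = SX"
      using h that by (simp add: rev_nth)
  qed
  then show ?thesis unfolding strle_def by auto
qed

lemma contractible_Str_ab_X_bit:
  assumes "b \<noteq> SX" "0 < M" "2 * M < N"
  shows "contractible_space (geom_real (Str_ab N M SX b) strle)"
proof -
  have "geom_real (rev ` Str_ab N M b SX) strle homeomorphic_space geom_real (Str_ab N M b SX) strle"
    by (rule homeomorphic_space_geom_real_involution) (simp_all add: strle_rev)
  then show ?thesis
    using Str_ab_X_bit_eq_rev[OF assms(2)] contractible_Str_ab_bit_X[OF assms]
      homeomorphic_space_contractibility by metis
qed

theorem proposition5p6:
  fixes N M :: nat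
  assumes "0 < M" and "2 * M < N"
  shows "contractible_space (geom_real (Str_ab N M S0 SX) strle)
       \<and> contractible_space (geom_real (Str_ab N M SX S0) strle)
       \<and> contractible_space (geom_real (Str_ab N M S1 SX) strle)
       \<and> contractible_space (geom_real (Str_ab N M SX S1) strle)"
  using contractible_Str_ab_bit_X contractible_Str_ab_X_bit assms by simp

end
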